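(* Let $d\ge1$, $G\le S_d$, $n\ge 0$. Then $\mathscr{P}^G_n$ is spanned by the tensors $\delta_Q$, where $Q$ ranges over set partitions of $\{1,\dots,n\}$, together with the tensors $T_P(S)$, where $P$ ranges over set partitions of the disjoint union $\{a_1,\dots,a_d\}\sqcup\{b_1,\dots,b_n\}$. Here $\delta_Q=\sum_{\vec j} e_{\vec j}$, summed over $\vec j\in[d]^n$ with $j_s=j_t$ whenever $s,t$ lie in a common block of $Q$, and $T_P(S)=\sum_{\vec j\in[d]^n}\Big(\sum_{\vec k\in[d]^d} S_{\vec k}\,\chi_P(\vec k,\vec j)\Big)e_{\vec j}$, where $\chi_P(\vec k,\vec j)=1$ if the labelling $a_s\mapsto k_s$, $b_t\mapsto j_t$ is constant on each block of $P$, and $\chi_P(\vec k,\vec j)=0$ otherwise. (For $n=0$, $\mathscr{P}^G_0=\mathbb{C}$ and $\delta_\emptyset=1$.)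
   Context: $V=\mathbb{C}^d$ with basis $e_1,\dots,e_d$; $\mathscr{P}_0=\mathbb{C}$, $\mathscr{P}_n=V^{\otimes n}$, $e_{\vec j}=e_{j_1}\otimes\cdots\otimes e_{j_n}$. A subgroup $G\le S_d$ acts by $g\cdot e_i=e_{g(i)}$, diagonally on tensor powers; $\mathscr{P}^G_n$ is the subspace of $G$-fixed vectors in $\mathscr{P}_n$. The molecule is $S=\sum_{g\in G}e_{g(1)}\otimes\cdots\otimes e_{g(d)}=\sum_{\vec k\in[d]^d}S_{\vec k}e_{\vec k}$. *)

theory Defs
  imports Complex_Main "HOL-Library.Disjoint_Sets" "HOL-Library.FuncSet"
    "HOL-Combinatorics.Permutations" "HOL-Library.Function_Algebras"
begin

(* Indices are 0-based: the basis of V = C^d is e_0,...,e_{d-1}.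
  A tensor in P_n = V^{\<otimes>n} is represented by its coefficient function
  on multi-indices j in {..<n} \<rightarrow>\<^sub>E {..<d}, extended by 0 elsewhere. *)

type_synonym tensor = "(nat \<Rightarrow> nat) \<Rightarrow> complex"

definition idx :: "nat \<Rightarrow> nat \<Rightarrow> (nat \<Rightarrow> nat) set" where
  "idx d n = {..<n} \<rightarrow>\<^sub>E {..<d}"

definition is_tensor :: "nat \<Rightarrow> nat \<Rightarrow> tensor \<Rightarrow> bool" where
  "is_tensor d n T \<longleftrightarrow> (\<forall>j. j \<notin> idx d n \<longrightarrow> T j = 0)"

(* G is a subgroup of S_d (permutations of {..<d}); finite, so closure
  under composition and containing id suffices. *)
definition subgroup_Sd :: "nat \<Rightarrow> (nat \<Rightarrow> nat) set \<Rightarrow> bool" where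
  "subgroup_Sd d G \<longleftrightarrow> G \<subseteq> {g. g permutes {..<d}} \<and> id \<in> G
     \<and> (\<forall>g\<in>G. \<forall>h\<in>G. g \<circ> h \<in> G)"

(* Diagonal action: g . e_j = e_{g o j}; T is fixed iff its coefficients
  are constant along orbits. *)
definition invariant_tensors :: "nat \<Rightarrow> (nat \<Rightarrow> nat) set \<Rightarrow> nat \<Rightarrow> tensor set" where
  "invariant_tensors d G n = {T. is_tensor d n T \<and>
     (\<forall>g\<in>G. \<forall>j\<in>idx d n. T (restrict (g \<circ> j) {..<n}) = T j)}"

definition tspan :: "tensor set \<Rightarrow> tensor set" where
  "tspan A = module.span (\<lambda>(c::complex) (T::tensor). (\<lambda>j. c * T j)) A"

definition delta :: "nat \<Rightarrow> nat \<Rightarrow> nat set set \<Rightarrow> tensor" where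
  "delta d n Q = (\<lambda>j. if j \<in> idx d n \<and> (\<forall>B\<in>Q. \<forall>s\<in>B. \<forall>t\<in>B. j s = j t) then 1 else 0)"

(* Coefficients of the molecule S = sum_{g in G} e_{g(0)} ... e_{g(d-1)}. *)
definition molecule :: "nat \<Rightarrow> (nat \<Rightarrow> nat) set \<Rightarrow> (nat \<Rightarrow> nat) \<Rightarrow> complex" where
  "molecule d G k = (\<Sum>g\<in>G. if k = restrict g {..<d} then 1 else 0)"

(* Disjoint union {a_0..a_{d-1}} \<sqcup> {b_0..b_{n-1}} as Inl/Inr. *)
definition ab_set :: "nat \<Rightarrow> nat \<Rightarrow> (nat + nat) set" where
  "ab_set d n = Inl ` {..<d} \<union> Inr ` {..<n}"

definition chi :: "(nat + nat) set set \<Rightarrow> (nat \<Rightarrow> nat) \<Rightarrow> (nat \<Rightarrow> nat) \<Rightarrow> complex" where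
  "chi P k j = (if \<forall>B\<in>P. \<forall>x\<in>B. \<forall>y\<in>B. case_sum k j x = case_sum k j y then 1 else 0)"

definition T_P :: "nat \<Rightarrow> nat \<Rightarrow> (nat + nat) set set \<Rightarrow> ((nat \<Rightarrow> nat) \<Rightarrow> complex) \<Rightarrow> tensor" where
  "T_P d n P S = (\<lambda>j. if j \<in> idx d n then (\<Sum>k\<in>idx d d. S k * chi P k j) else 0)"

end

theory Submission
  imports Defs
begin

text \<open>Averaging an invariant tensor over \<open>G\<close> writes it as a combination of the
  orbit sums \<open>\<Sum>\<^sub>g\<^sub>\<in>\<^sub>G e\<^sub>g\<^sub>\<circ>\<^sub>j\<close>. Each orbit sum is itself some \<open>T\<^sub>P(S)\<close>:
  take for \<open>P\<close> the partition whose blocks are \<open>{a\<^sub>s} \<union> {b\<^sub>t | j\<^sub>t = s}\<close>, so that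
  \<open>\<chi>\<^sub>P(k, j')\<close> forces \<open>j' = k \<circ> j\<close> and the molecule then sums over \<open>k = g\<close>.
  Conversely all the \<open>\<delta>\<^sub>Q\<close> and \<open>T\<^sub>P(S)\<close> are invariant, because applying \<open>g\<close>
  to all labels preserves which labels agree and \<open>S\<close> is \<open>G\<close>-invariant.\<close>

definition relabel :: "nat \<Rightarrow> (nat \<Rightarrow> nat) \<Rightarrow> (nat \<Rightarrow> nat) \<Rightarrow> nat \<Rightarrow> nat" where
  "relabel n g j = restrict (g \<circ> j) {..<n}"

definition orbit_tensor :: "(nat \<Rightarrow> nat) set \<Rightarrow> nat \<Rightarrow> (nat \<Rightarrow> nat) \<Rightarrow> tensor" where
  "orbit_tensor G n j = (\<lambda>j'. \<Sum>g\<in>G. if j' = relabel n g j then 1 else 0)"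

definition block_partition :: "nat \<Rightarrow> nat \<Rightarrow> (nat \<Rightarrow> nat) \<Rightarrow> (nat + nat) set set" where
  "block_partition d n j = (\<lambda>s. insert (Inl s) (Inr ` {t. t < n \<and> j t = s})) ` {..<d}"

lemma tensor_module: "module (\<lambda>(c::complex) (T::tensor). (\<lambda>j. c * T j))"
  by unfold_locales (auto simp: fun_eq_iff algebra_simps)

lemma sum_apply: "finite A \<Longrightarrow> (sum f A) x = (\<Sum>a\<in>A. f a x)"
  by (induction A rule: finite_induct) auto

lemma finite_idx: "finite (idx d n)"
  by (simp add: idx_def finite_PiE)

lemma mem_invariant_tensors_iff:
  "T \<in> invariant_tensors d G n \<longleftrightarrow>
     is_tensor d n T \<and> (\<forall>g\<in>G. \<forall>j\<in>idx d n. T (relabel n g j) = T j)"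
  by (simp add: invariant_tensors_def relabel_def)

lemma subspace_invariant_tensors:
  "module.subspace (\<lambda>(c::complex) (T::tensor). (\<lambda>j. c * T j)) (invariant_tensors d G n)"
  unfolding module.subspace_def[OF tensor_module] invariant_tensors_def is_tensor_def
  by auto

lemma subgroup_Sd_finite: "subgroup_Sd d G \<Longrightarrow> finite G"
  unfolding subgroup_Sd_def using finite_permutations[of "{..<d}"] finite_subset by blast

lemma subgroup_Sd_permutes: "subgroup_Sd d G \<Longrightarrow> g \<in> G \<Longrightarrow> g permutes {..<d}"
  by (auto simp: subgroup_Sd_def)

lemma subgroup_Sd_card_pos: "subgroup_Sd d G \<Longrightarrow> card G > 0"
  using subgroup_Sd_finite by (auto simp: subgroup_Sd_def card_gt_0_iff)

lemma bij_betw_comp_left_subgroup_Sd: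
  assumes "subgroup_Sd d G" "g \<in> G"
  shows "bij_betw ((\<circ>) g) G G"
proof -
  have "inj g"
    using permutes_inj subgroup_Sd_permutes[OF assms] .
  then have inj: "inj_on ((\<circ>) g) G"
    by (auto intro!: inj_onI simp: fun_eq_iff inj_eq)
  have "(\<circ>) g ` G \<subseteq> G"
    using assms by (auto simp: subgroup_Sd_def)
  then show ?thesis
    using endo_inj_surj[OF subgroup_Sd_finite[OF assms(1)] _ inj] inj by (simp add: bij_betw_def)
qed

lemma relabel_in_idx: "g permutes {..<d} \<Longrightarrow> j \<in> idx d n \<Longrightarrow> relabel n g j \<in> idx d n"
  using permutes_in_image[of g "{..<d}"] by (auto simp: idx_def relabel_def)

lemma relabel_inv_relabel:
  "g permutes {..<d} \<Longrightarrow> j \<in> idx d n \<Longrightarrow> relabel n (inv g) (relabel n g j) = j"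
  using permutes_inverses(2)[of g "{..<d}"]
  by (auto simp: idx_def relabel_def fun_eq_iff PiE_def extensional_def)

lemma bij_betw_relabel:
  assumes "g permutes {..<d}"
  shows "bij_betw (relabel n g) (idx d n) (idx d n)"
proof (rule bij_betw_byWitness[where f' = "relabel n (inv g)"])
  have inv: "inv g permutes {..<d}"
    using assms permutes_inv by blast
  show "\<forall>j\<in>idx d n. relabel n (inv g) (relabel n g j) = j"
    using relabel_inv_relabel[OF assms] by blast
  show "\<forall>j\<in>idx d n. relabel n g (relabel n (inv g) j) = j"
    using relabel_inv_relabel[OF inv] inv_inv_eq[OF permutes_bij[OF assms]] by metis
  show "relabel n g ` idx d n \<subseteq> idx d n" "relabel n (inv g) ` idx d n \<subseteq> idx d n"
    using relabel_in_idx[OF assms] relabel_in_idx[OF inv] by auto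
qed

lemma relabel_eq_relabel_iff:
  "inj g \<Longrightarrow> j \<in> idx d n \<Longrightarrow> relabel n g j = relabel n g j' \<longleftrightarrow> j = restrict j' {..<n}"
  by (auto simp: idx_def relabel_def fun_eq_iff PiE_def extensional_def inj_eq)

lemma molecule_relabel:
  assumes "subgroup_Sd d G" "g \<in> G" "k \<in> idx d d"
  shows "molecule d G (relabel d g k) = molecule d G k"
proof -
  have "inj g"
    using permutes_inj subgroup_Sd_permutes[OF assms(1,2)] .
  have "molecule d G (relabel d g k) = (\<Sum>h\<in>G. if relabel d g k = relabel d g h then 1 else 0)"
    unfolding molecule_def relabel_def
    by (rule sym[OF sum.reindex_bij_betw[OF bij_betw_comp_left_subgroup_Sd[OF assms(1,2)],
        of "\<lambda>h. if restrict (g \<circ> k) {..<d} = restrict h {..<d} then 1 else 0"]])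
  also have "\<dots> = molecule d G k"
    unfolding molecule_def using relabel_eq_relabel_iff[OF \<open>inj g\<close> assms(3)] by simp
  finally show ?thesis .
qed

lemma delta_invariant:
  assumes "subgroup_Sd d G" "partition_on {..<n} Q"
  shows "delta d n Q \<in> invariant_tensors d G n"
  unfolding mem_invariant_tensors_iff
proof (intro conjI ballI)
  show "is_tensor d n (delta d n Q)"
    by (simp add: is_tensor_def delta_def)
  fix g j assume g: "g \<in> G" and j: "j \<in> idx d n"
  have perm: "g permutes {..<d}"
    using subgroup_Sd_permutes[OF assms(1) g] .
  have "\<And>B s. B \<in> Q \<Longrightarrow> s \<in> B \<Longrightarrow> s < n"
    using assms(2) by (auto simp: partition_on_def)
  then have "(\<forall>B\<in>Q. \<forall>s\<in>B. \<forall>t\<in>B. relabel n g j s = relabel n g j t)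
           \<longleftrightarrow> (\<forall>B\<in>Q. \<forall>s\<in>B. \<forall>t\<in>B. j s = j t)"
    using permutes_inj[OF perm] by (auto simp: relabel_def inj_eq)
  then show "delta d n Q (relabel n g j) = delta d n Q j"
    using relabel_in_idx[OF perm j] j by (simp add: delta_def)
qed

lemma chi_relabel:
  assumes "inj g" "partition_on (ab_set d n) P"
  shows "chi P (relabel d g k) (relabel n g j) = chi P k j"
proof -
  have relabel_case_sum: "case_sum (relabel d g k) (relabel n g j) x = g (case_sum k j x)"
    if "B \<in> P" "x \<in> B" for B x
  proof -
    have "x \<in> ab_set d n"
      using that partition_onD1[OF assms(2)] by blast
    then show ?thesis
      by (auto simp: ab_set_def relabel_def)
  qed
  have "(\<forall>B\<in>P. \<forall>x\<in>B. \<forall>y\<in>B.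
               case_sum (relabel d g k) (relabel n g j) x = case_sum (relabel d g k) (relabel n g j) y)
           \<longleftrightarrow> (\<forall>B\<in>P. \<forall>x\<in>B. \<forall>y\<in>B. case_sum k j x = case_sum k j y)"
    by (simp add: relabel_case_sum inj_eq[OF assms(1)] cong: ball_cong)
  then show ?thesis
    by (simp add: chi_def)
qed


lemma T_P_molecule_invariant:
  assumes "subgroup_Sd d G" "partition_on (ab_set d n) P"
  shows "T_P d n P (molecule d G) \<in> invariant_tensors d G n"
  unfolding mem_invariant_tensors_iff
proof (intro conjI ballI)
  show "is_tensor d n (T_P d n P (molecule d G))"
    by (simp add: is_tensor_def T_P_def)
  fix g j assume g: "g \<in> G" and j: "j \<in> idx d n"
  have perm: "g permutes {..<d}"
    using subgroup_Sd_permutes[OF assms(1) g] .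
  have "(\<Sum>k\<in>idx d d. molecule d G k * chi P k (relabel n g j))
      = (\<Sum>k\<in>idx d d. molecule d G (relabel d g k) * chi P (relabel d g k) (relabel n g j))"
    using sum.reindex_bij_betw[OF bij_betw_relabel[OF perm],
        of "\<lambda>k. molecule d G k * chi P k (relabel n g j)"] by simp
  also have "\<dots> = (\<Sum>k\<in>idx d d. molecule d G k * chi P k j)"
    using molecule_relabel[OF assms(1) g] chi_relabel[OF permutes_inj[OF perm] assms(2)] by simp
  finally show "T_P d n P (molecule d G) (relabel n g j) = T_P d n P (molecule d G) j"
    using relabel_in_idx[OF perm j] j by (simp add: T_P_def)
qed

lemma is_tensor_orbit_tensor:
  assumes "subgroup_Sd d G" "j \<in> idx d n"
  shows "is_tensor d n (orbit_tensor G n j)"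
  unfolding is_tensor_def orbit_tensor_def
proof (intro allI impI sum.neutral ballI)
  fix j' g assume "j' \<notin> idx d n" "g \<in> G"
  then show "(if j' = relabel n g j then 1 else 0) = 0"
    using relabel_in_idx[OF subgroup_Sd_permutes[OF assms(1)] assms(2)] by auto
qed

lemma partition_on_block_partition:
  assumes "j \<in> idx d n"
  shows "partition_on (ab_set d n) (block_partition d n j)"
proof (rule partition_onI)
  show "\<Union> (block_partition d n j) = ab_set d n"
    using assms by (auto simp: block_partition_def ab_set_def idx_def)
  show "{} \<notin> block_partition d n j"
    by (auto simp: block_partition_def)
  show "disjnt p q" if "p \<in> block_partition d n j" "q \<in> block_partition d n j" "p \<noteq> q" for p q
    using that by (auto simp: block_partition_def disjnt_def)
qed

lemma chi_block_partition:
  assumes "j \<in> idx d n"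
  shows "chi (block_partition d n j) k j' = (if \<forall>t<n. j' t = k (j t) then 1 else 0)"
proof -
  let ?block = "\<lambda>s. insert (Inl s) (Inr ` {t. t < n \<and> j t = s})"
  have "(\<forall>B\<in>block_partition d n j. \<forall>x\<in>B. \<forall>y\<in>B. case_sum k j' x = case_sum k j' y)
      \<longleftrightarrow> (\<forall>s<d. \<forall>x\<in>?block s. case_sum k j' x = k s)"
    by (auto simp: block_partition_def)
  also have "\<dots> \<longleftrightarrow> (\<forall>t<n. j' t = k (j t))"
    using assms by (auto simp: idx_def)
  finally show ?thesis
    by (simp add: chi_def)
qed

lemma T_P_block_partition:
  assumes "subgroup_Sd d G" "j \<in> idx d n"
  shows "T_P d n (block_partition d n j) (molecule d G) = orbit_tensor G n j"
proof
  fix j'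
  have in_idx: "restrict g {..<d} \<in> idx d d" if "g \<in> G" for g
    using permutes_in_image[OF subgroup_Sd_permutes[OF assms(1) that]] by (auto simp: idx_def)
  have chi_eq: "chi (block_partition d n j) (restrict g {..<d}) j' = (if j' = relabel n g j then 1 else 0)"
    if "j' \<in> idx d n" for g
    using chi_block_partition[OF assms(2)] that assms(2)
    by (auto simp: idx_def relabel_def fun_eq_iff PiE_def extensional_def)
  show "T_P d n (block_partition d n j) (molecule d G) j' = orbit_tensor G n j j'"
  proof (cases "j' \<in> idx d n")
    case True
    have "T_P d n (block_partition d n j) (molecule d G) j'
        = (\<Sum>k\<in>idx d d. \<Sum>g\<in>G. (if k = restrict g {..<d} then 1 else 0) * chi (block_partition d n j) k j')"
      using True by (simp add: T_P_def molecule_def sum_distrib_right)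
    also have "\<dots> = (\<Sum>g\<in>G. \<Sum>k\<in>idx d d. if k = restrict g {..<d} then chi (block_partition d n j) k j' else 0)"
      by (subst sum.swap) (intro sum.cong refl; simp)
    also have "\<dots> = (\<Sum>g\<in>G. chi (block_partition d n j) (restrict g {..<d}) j')"
      using in_idx finite_idx by (simp add: sum.delta)
    finally show ?thesis
      using chi_eq[OF True] by (simp add: orbit_tensor_def)
  next
    case False
    then show ?thesis
      using is_tensor_orbit_tensor[OF assms] by (simp add: T_P_def is_tensor_def)
  qed
qed

lemma sum_invariant_relabel_indicator:
  assumes "subgroup_Sd d G" "T \<in> invariant_tensors d G n" "g \<in> G" "j' \<in> idx d n"
  shows "(\<Sum>j\<in>idx d n. T j * (if j' = relabel n g j then 1 else 0)) = T j'"
proof -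
  have perm: "g permutes {..<d}"
    using subgroup_Sd_permutes[OF assms(1,3)] .
  have "(\<Sum>j\<in>idx d n. T j * (if j' = relabel n g j then 1 else 0))
      = (\<Sum>j\<in>idx d n. T (relabel n g j) * (if j' = relabel n g j then 1 else 0))"
    using assms(2,3) by (simp add: mem_invariant_tensors_iff)
  also have "\<dots> = (\<Sum>j\<in>idx d n. if j' = j then T j else 0)"
    using sum.reindex_bij_betw[OF bij_betw_relabel[OF perm],
        of "\<lambda>j. if j' = j then T j else 0"] by (simp add: if_distrib cong: if_cong)
  also have "\<dots> = T j'"
    using assms(4) finite_idx by simp
  finally show ?thesis .
qed

lemma invariant_tensor_eq_orbit_average:
  assumes "subgroup_Sd d G" "T \<in> invariant_tensors d G n"
  shows "T = (\<Sum>j\<in>idx d n. (\<lambda>j'. T j / of_nat (card G) * orbit_tensor G n j j'))"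
proof
  fix j'
  have "j' \<in> idx d n \<Longrightarrow>
      (\<Sum>j\<in>idx d n. T j / of_nat (card G) * orbit_tensor G n j j') = T j'"
    using sum_invariant_relabel_indicator[OF assms] subgroup_Sd_card_pos[OF assms(1)]
    by (simp add: orbit_tensor_def sum_distrib_left sum_divide_distrib[symmetric]
        sum.swap[of _ G])
  moreover have "j' \<notin> idx d n \<Longrightarrow> T j' = 0"
    using assms(2) by (simp add: mem_invariant_tensors_iff is_tensor_def)
  moreover have "j' \<notin> idx d n \<Longrightarrow> j \<in> idx d n \<Longrightarrow> orbit_tensor G n j j' = 0" for j
    using is_tensor_orbit_tensor[OF assms(1)] by (simp add: is_tensor_def)
  ultimately show "T j' = (\<Sum>j\<in>idx d n. (\<lambda>j'. T j / of_nat (card G) * orbit_tensor G n j j')) j'"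
    by (cases "j' \<in> idx d n") (simp_all add: sum_apply finite_idx)
qed

theorem theorem4p3:
  fixes d n :: nat and G :: "(nat \<Rightarrow> nat) set"
  assumes "d \<ge> 1" and "subgroup_Sd d G"
  shows "invariant_tensors d G n =
    tspan ({delta d n Q | Q. partition_on {..<n} Q}
           \<union> {T_P d n P (molecule d G) | P. partition_on (ab_set d n) P})"
proof
  let ?A = "{delta d n Q | Q. partition_on {..<n} Q}
           \<union> {T_P d n P (molecule d G) | P. partition_on (ab_set d n) P}"
  interpret tensor: module "\<lambda>(c::complex) (T::tensor). (\<lambda>j. c * T j)"
    by (rule tensor_module)
  show "tspan ?A \<subseteq> invariant_tensors d G n"
    unfolding tspan_def using delta_invariant[OF assms(2)] T_P_molecule_invariant[OF assms(2)]
    by (intro tensor.span_minimal subspace_invariant_tensors) blast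
  show "invariant_tensors d G n \<subseteq> tspan ?A"
  proof
    fix T assume T: "T \<in> invariant_tensors d G n"
    have "orbit_tensor G n j \<in> ?A" if "j \<in> idx d n" for j
      using T_P_block_partition[OF assms(2) that] partition_on_block_partition[OF that] by force
    then have "(\<Sum>j\<in>idx d n. (\<lambda>j'. T j / of_nat (card G) * orbit_tensor G n j j')) \<in> tspan ?A"
      unfolding tspan_def by (intro tensor.span_sum tensor.span_scale tensor.span_base)
    then show "T \<in> tspan ?A"
      using invariant_tensor_eq_orbit_average[OF assms(2) T] by simp
  qed
qed

end
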